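(* Let $n\ge1$, let $C=(c_{i,j})$ be an $n\times n$ Bott matrix over $\mathbb{Z}_2$, $Y_n=Y(C)$ the associated real Bott tower and $\alpha_{n+1},\dots,\alpha_{2n}\in\pi_1(Y_n)$ as defined below. Then the commutator subgroup $[\pi_1(Y_n),\pi_1(Y_n)]$ is a free abelian group with generators $\alpha_q^2$, where $n+1\le q\le 2n$ ranges over those indices for which there exists $p<q$ with $c_{p-n,q-n}=1$.
   Context: A Bott matrix is an $n\times n$ matrix $C=(c_{i,j})$ with entries in $\mathbb{Z}_2$ such that $c_{i,i}=1$ and $c_{i,j}=0$ for $i>j$. Label the facets of the $n$-cube $I^n$ as $F_1,\dots,F_{2n}$ with $F_j$, $F_{n+j}$ opposite. With $e_1,\dots,e_n$ the standard basis of $\mathbb{Z}_2^n$, set $\lambda(F_j)=e_j$, $\lambda(F_{n+j})=e_j+\sum_{k>j}c_{j,k}e_k$. The real Bott tower $Y(C)$ is the small cover $(\mathbb{Z}_2^n\times I^n)/\sim$, where $(t,p)\sim(t',p')$ iff $p=p'$ and $t-t'$ lies in the span of $\lambda(F)$ over facets $F\ni p$. Let $W$ be the right-angled Coxeter group with generators $s_1,\dots,s_{2n}$ and relations $s_j^2=1$ and $(s_is_j)^2=1$ for $1\le i<j\le 2n$, $j\ne i+n$; then $\pi_1(Y_n)$ is the kernel of the homomorphism $W\to\mathbb{Z}_2^n$, $s_i\mapsto\lambda(F_i)$. For $n+1\le j\le 2n$, $\alpha_j:=s_js_{j-n}s_{j-n+1}^{c_{j-n,j-n+1}}\cdots s_n^{c_{j-n,n}}$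 (so $\alpha_{2n}=s_{2n}s_n$); these lie in $\pi_1(Y_n)$. *)

theory Defs
  imports "HOL-Algebra.Free_Abelian_Groups" "HOL-Algebra.Generated_Groups"
begin

text \<open>Bott matrix: c :: nat => nat => bool, entries indexed by 1..n; True = 1 in Z_2.\<close>
definition bott_matrix :: "nat \<Rightarrow> (nat \<Rightarrow> nat \<Rightarrow> bool) \<Rightarrow> bool" where
  "bott_matrix n c \<longleftrightarrow> (\<forall>i\<in>{1..n}. c i i) \<and> (\<forall>i\<in>{1..n}. \<forall>j\<in>{1..n}. i > j \<longrightarrow> \<not> c i j)"

text \<open>Relators of the right-angled Coxeter group W on generators s_1..s_{2n}:
  s_j^2 and (s_i s_j)^2 for i<j, j \<noteq> i+n.\<close>
definition relators :: "nat \<Rightarrow> nat list set" where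
  "relators n = {[s, s] | s. s \<in> {1..2*n}}
     \<union> {[i, j, i, j] | i j. i \<in> {1..2*n} \<and> j \<in> {1..2*n} \<and> i < j \<and> j \<noteq> i + n}"

definition words :: "nat \<Rightarrow> nat list set" where
  "words n = {w. set w \<subseteq> {1..2*n}}"

inductive weq :: "nat \<Rightarrow> nat list \<Rightarrow> nat list \<Rightarrow> bool" for n where
  weq_refl: "w \<in> words n \<Longrightarrow> weq n w w"
| weq_sym: "weq n u v \<Longrightarrow> weq n v u"
| weq_trans: "weq n u v \<Longrightarrow> weq n v w \<Longrightarrow> weq n u w"
| weq_rel: "u \<in> words n \<Longrightarrow> v \<in> words n \<Longrightarrow> r \<in> relators n \<Longrightarrow> weq n (u @ r @ v) (u @ v)"

definition cls :: "nat \<Rightarrow> nat list \<Rightarrow> nat list set" where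
  "cls n w = {v. weq n w v}"

definition rep :: "nat list set \<Rightarrow> nat list" where
  "rep X = (SOME w. w \<in> X)"

text \<open>The right-angled Coxeter group W (every generator is an involution, so the
  monoid of words modulo the relator congruence is the presented group).\<close>
definition coxW :: "nat \<Rightarrow> nat list set monoid" where
  "coxW n = \<lparr> carrier = cls n ` words n,
              mult = (\<lambda>X Y. cls n (rep X @ rep Y)),
              one = cls n [] \<rparr>"

definition Z2n :: "nat \<Rightarrow> (nat \<Rightarrow> bool) monoid" where
  "Z2n n = \<lparr> carrier = {v. \<forall>i. v i \<longrightarrow> i \<in> {1..n}},
             mult = (\<lambda>u v i. u i \<noteq> v i),
             one = (\<lambda>_. False) \<rparr>"

definition lam :: "nat \<Rightarrow> (nat \<Rightarrow> nat \<Rightarrow> bool) \<Rightarrow> nat \<Rightarrow> nat \<Rightarrow> bool" where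
  "lam n c s = (if s \<le> n then (\<lambda>k. k = s)
                else (\<lambda>k. k = s - n \<or> (s - n < k \<and> k \<le> n \<and> c (s - n) k)))"

definition lam_word :: "nat \<Rightarrow> (nat \<Rightarrow> nat \<Rightarrow> bool) \<Rightarrow> nat list \<Rightarrow> nat \<Rightarrow> bool" where
  "lam_word n c w = foldr (\<lambda>s acc k. lam n c s k \<noteq> acc k) w (\<lambda>_. False)"

definition lamhom :: "nat \<Rightarrow> (nat \<Rightarrow> nat \<Rightarrow> bool) \<Rightarrow> nat list set \<Rightarrow> nat \<Rightarrow> bool" where
  "lamhom n c X = lam_word n c (rep X)"

definition pi1 :: "nat \<Rightarrow> (nat \<Rightarrow> nat \<Rightarrow> bool) \<Rightarrow> nat list set set" where
  "pi1 n c = kernel (coxW n) (Z2n n) (lamhom n c)"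

definition alpha :: "nat \<Rightarrow> (nat \<Rightarrow> nat \<Rightarrow> bool) \<Rightarrow> nat \<Rightarrow> nat list set" where
  "alpha n c j = cls n ([j, j - n] @ filter (\<lambda>k. c (j - n) k) [j - n + 1..<n + 1])"

definition index_set :: "nat \<Rightarrow> (nat \<Rightarrow> nat \<Rightarrow> bool) \<Rightarrow> nat set" where
  "index_set n c = {q. n + 1 \<le> q \<and> q \<le> 2*n \<and> (\<exists>p. n + 1 \<le> p \<and> p < q \<and> c (p - n) (q - n))}"

end

theory Submission
  imports Defs
begin

text \<open>W is the direct product of the n infinite dihedral groups generated by s_k and s_{n+k}
  (the relators make generators with different k commute); we realise this by a faithful
  coordinate representation with explicit normal forms. In these coordinates the k-th entry of
  \<lambda> is the parity of reflections in the k-th factor plus the parities of the translations in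
  the factors j < k with c_{j,k} = 1. Commutators in a dihedral group are even translations,
  trivial between two translations, and elements of \<pi>_1 have no reflection in a factor k whose
  column has no entry above the diagonal. Hence [\<pi>_1, \<pi>_1] lies in the lattice of even
  translations supported on the columns q - n with q in the index set. Conversely, \<alpha>_q^2 is the
  translation by 2 in the factor q - n, and it equals the commutator of \<alpha>_q and \<alpha>_p whenever
  p < q and c_{p-n,q-n} = 1; so the commutator subgroup is exactly this lattice, free abelian
  on the \<alpha>_q^2.\<close>

section \<open>The right-angled Coxeter group as a group of word classes\<close>

lemma weq_words: "weq n u v \<Longrightarrow> u \<in> words n \<and> v \<in> words n"
  by (induction rule: weq.induct) (auto simp: words_def relators_def)

lemma words_append [simp]: "u @ v \<in> words n \<longleftrightarrow> u \<in> words n \<and> v \<in> words n"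
  by (auto simp: words_def)

lemma words_Cons [simp]: "s # v \<in> words n \<longleftrightarrow> s \<in> {1..2*n} \<and> v \<in> words n"
  by (auto simp: words_def)

lemma words_Nil [simp]: "[] \<in> words n"
  by (simp add: words_def)

lemma weq_append_right: "weq n u v \<Longrightarrow> w \<in> words n \<Longrightarrow> weq n (u @ w) (v @ w)"
proof (induction rule: weq.induct)
  case (weq_rel u v r)
  then show ?case using weq.weq_rel[of u n "v @ w" r] by simp
qed (auto intro: weq.intros)

lemma weq_append_left: "weq n u v \<Longrightarrow> w \<in> words n \<Longrightarrow> weq n (w @ u) (w @ v)"
proof (induction rule: weq.induct)
  case (weq_rel u v r)
  then show ?case using weq.weq_rel[of "w @ u" n v r] by simp
qed (auto intro: weq.intros)

lemma weq_append: "weq n u u' \<Longrightarrow> weq n v v' \<Longrightarrow> weq n (u @ v) (u' @ v')"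
  by (meson weq_append_left weq_append_right weq.weq_trans weq_words)

lemma cls_eq_iff: "u \<in> words n \<Longrightarrow> cls n u = cls n v \<longleftrightarrow> weq n u v"
  unfolding cls_def by (auto intro: weq.intros)

lemma weq_rep_cls: "u \<in> words n \<Longrightarrow> weq n u (rep (cls n u))"
  unfolding rep_def cls_def by (metis mem_Collect_eq someI_ex weq.weq_refl)

lemma carrier_coxW: "carrier (coxW n) = cls n ` words n"
  by (simp add: coxW_def)

lemma one_coxW: "\<one>\<^bsub>coxW n\<^esub> = cls n []"
  by (simp add: coxW_def)

lemma cls_in_carrier: "w \<in> words n \<Longrightarrow> cls n w \<in> carrier (coxW n)"
  by (simp add: carrier_coxW)

lemma mult_cls:
  "u \<in> words n \<Longrightarrow> v \<in> words n \<Longrightarrow> cls n u \<otimes>\<^bsub>coxW n\<^esub> cls n v = cls n (u @ v)"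
  unfolding coxW_def
  by simp (metis cls_eq_iff weq_rep_cls weq_words weq_append weq.weq_sym words_append)

lemma weq_rev_append: "w \<in> words n \<Longrightarrow> weq n (rev w @ w) []"
proof (induction w)
  case (Cons s w)
  have "weq n (rev w @ [s, s] @ w) (rev w @ w)"
    using Cons.prems by (intro weq.weq_rel) (auto simp: relators_def words_def)
  with Cons show ?case by (auto intro: weq.weq_trans)
qed (auto intro: weq.weq_refl)

lemma group_coxW: "group (coxW n)"
proof (rule groupI)
  fix x
  assume "x \<in> carrier (coxW n)"
  then obtain w where w: "w \<in> words n" "x = cls n w"
    by (auto simp: carrier_coxW)
  then have "rev w \<in> words n" "cls n (rev w) \<otimes>\<^bsub>coxW n\<^esub> x = \<one>\<^bsub>coxW n\<^esub>"
    by (auto simp: words_def mult_cls one_coxW cls_eq_iff weq_rev_append)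
  then show "\<exists>y\<in>carrier (coxW n). y \<otimes>\<^bsub>coxW n\<^esub> x = \<one>\<^bsub>coxW n\<^esub>"
    by (auto simp: carrier_coxW)
qed (auto simp: carrier_coxW one_coxW mult_cls)

lemma cls_relator: "r \<in> relators n \<Longrightarrow> cls n r = \<one>\<^bsub>coxW n\<^esub>"
proof -
  assume "r \<in> relators n"
  then have "weq n ([] @ r @ []) ([] @ [])"
    by (intro weq.weq_rel) auto
  then show ?thesis
    by (metis append.left_neutral append.right_neutral cls_eq_iff one_coxW weq_words)
qed

lemma cls_singleton_square:
  assumes "s \<in> {1..2*n}"
  shows "cls n [s] \<otimes>\<^bsub>coxW n\<^esub> cls n [s] = \<one>\<^bsub>coxW n\<^esub>"
proof -
  have "[s, s] \<in> relators n"
    using assms by (auto simp: relators_def)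
  with assms show ?thesis
    by (simp add: mult_cls cls_relator)
qed

lemma cls_replicate:
  assumes "u \<in> words n"
  shows "cls n (concat (replicate m u)) = cls n u [^]\<^bsub>coxW n\<^esub> m"
proof (induction m)
  case (Suc m)
  interpret group "coxW n" by (rule group_coxW)
  have "concat (replicate m u) \<in> words n"
    using assms by (auto simp: words_def)
  moreover have "cls n u \<otimes>\<^bsub>coxW n\<^esub> cls n u [^]\<^bsub>coxW n\<^esub> m = cls n u [^]\<^bsub>coxW n\<^esub> Suc m"
    using assms by (metis nat_pow_Suc2 cls_in_carrier)
  ultimately show ?case
    using Suc assms by (simp add: mult_cls[symmetric] del: nat_pow_Suc)
qed (simp add: one_coxW)

definition coord :: "nat \<Rightarrow> nat \<Rightarrow> nat" where
  "coord n s = (if s \<le> n then s else s - n)"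

lemma coord_range: "s \<in> {1..2*n} \<Longrightarrow> coord n s \<in> {1..n}"
  by (auto simp: coord_def)

lemma (in group) involutions_commute:
  assumes "a \<in> carrier G" "b \<in> carrier G" "a \<otimes> a = \<one>" "b \<otimes> b = \<one>" "a \<otimes> b \<otimes> a \<otimes> b = \<one>"
  shows "a \<otimes> b = b \<otimes> a"
proof -
  have "inv a = a" "inv b = b"
    using assms by (simp_all add: inv_equality)
  moreover have "inv (a \<otimes> b) = a \<otimes> b"
    using assms by (intro inv_equality) (auto simp: m_assoc)
  ultimately show ?thesis
    using assms by (simp add: inv_mult_group)
qed

lemma cls_singleton_commute:
  assumes s: "s \<in> {1..2*n}" and x: "x \<in> {1..2*n}" and "coord n s \<noteq> coord n x"
  shows "cls n [s] \<otimes>\<^bsub>coxW n\<^esub> cls n [x] = cls n [x] \<otimes>\<^bsub>coxW n\<^esub> cls n [s]"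
proof -
  interpret group "coxW n" by (rule group_coxW)
  have rel: "cls n [i] \<otimes>\<^bsub>coxW n\<^esub> cls n [j] \<otimes>\<^bsub>coxW n\<^esub> cls n [i] \<otimes>\<^bsub>coxW n\<^esub> cls n [j]
               = \<one>\<^bsub>coxW n\<^esub>"
    if "{i, j} = {s, x}" "i < j" for i j
  proof -
    have "[i, j, i, j] \<in> relators n"
      using assms that by (auto simp: relators_def coord_def doubleton_eq_iff)
    moreover have "i \<in> {1..2*n}" "j \<in> {1..2*n}"
      using s x that by (auto simp: doubleton_eq_iff)
    ultimately show ?thesis
      by (simp add: mult_cls cls_relator)
  qed
  have "s \<noteq> x"
    using assms by auto
  then consider "s < x" | "x < s"
    by linarith
  then show ?thesis
  proof cases
    case 1
    with s x show ?thesis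
      by (intro involutions_commute cls_in_carrier cls_singleton_square rel) auto
  next
    case 2
    with s x show ?thesis
      by (intro involutions_commute[symmetric] cls_in_carrier cls_singleton_square rel)
        (auto simp: insert_commute)
  qed
qed

section \<open>The embedding of W into a product of infinite dihedral groups\<close>

text \<open>A pair (e, t) stands for the element (b a)^t a^e of the infinite dihedral group
  generated by two involutions a and b. In the k-th factor, a and b are the images of
  s_k and s_{n+k}.\<close>
type_synonym dih = "bool \<times> int"

fun dih_mult :: "dih \<Rightarrow> dih \<Rightarrow> dih" where
  "dih_mult (e1, t1) (e2, t2) = (e1 \<noteq> e2, t1 + (if e1 then - t2 else t2))"

definition dih_inv :: "dih \<Rightarrow> dih" where
  "dih_inv x = (fst x, if fst x then snd x else - snd x)"

lemma dih_mult_assoc: "dih_mult (dih_mult x y) z = dih_mult x (dih_mult y z)"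
  by (cases x; cases y; cases z) auto

lemma fst_dih_mult [simp]: "fst (dih_mult x y) \<longleftrightarrow> fst x \<noteq> fst y"
  by (cases x; cases y) auto

lemma dih_mult_one [simp]: "dih_mult (False, 0) x = x" "dih_mult x (False, 0) = x"
  by (cases x; simp)+

lemma dih_inv_unique: "dih_mult x y = (False, 0) \<Longrightarrow> y = dih_inv x"
  by (cases x; cases y) (auto simp: dih_inv_def split: if_splits)

definition vmult :: "(nat \<Rightarrow> dih) \<Rightarrow> (nat \<Rightarrow> dih) \<Rightarrow> nat \<Rightarrow> dih" where
  "vmult g h = (\<lambda>k. dih_mult (g k) (h k))"

abbreviation vone :: "nat \<Rightarrow> dih" where
  "vone \<equiv> \<lambda>_. (False, 0)"

lemma vmult_assoc: "vmult (vmult f g) h = vmult f (vmult g h)"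
  by (simp add: vmult_def dih_mult_assoc)

lemma vmult_vone [simp]: "vmult vone h = h" "vmult h vone = h"
  by (simp_all add: vmult_def)

definition gen_dih :: "nat \<Rightarrow> nat \<Rightarrow> dih" where
  "gen_dih n s = (True, if s \<le> n then 0 else 1)"

lemma fst_gen_dih [simp]: "fst (gen_dih n s)"
  by (simp add: gen_dih_def)

definition gen_vec :: "nat \<Rightarrow> nat \<Rightarrow> nat \<Rightarrow> dih" where
  "gen_vec n s = vone(coord n s := gen_dih n s)"

lemma vmult_gen_vec:
  "vmult (gen_vec n s) h = h(coord n s := dih_mult (gen_dih n s) (h (coord n s)))"
  by (auto simp: fun_eq_iff vmult_def gen_vec_def)

definition dih_word :: "nat \<Rightarrow> nat list \<Rightarrow> nat \<Rightarrow> dih" where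
  "dih_word n w = foldr (\<lambda>s. vmult (gen_vec n s)) w vone"

lemma dih_word_Nil [simp]: "dih_word n [] = vone"
  by (simp add: dih_word_def)

lemma dih_word_Cons [simp]: "dih_word n (s # w) = vmult (gen_vec n s) (dih_word n w)"
  by (simp add: dih_word_def)

lemma dih_word_append: "dih_word n (u @ v) = vmult (dih_word n u) (dih_word n v)"
  by (induction u) (simp_all add: vmult_assoc)

lemma dih_word_relator: "r \<in> relators n \<Longrightarrow> dih_word n r = vone"
  by (auto simp: relators_def vmult_def gen_vec_def gen_dih_def coord_def fun_eq_iff)

lemma dih_word_weq: "weq n u v \<Longrightarrow> dih_word n u = dih_word n v"
  by (induction rule: weq.induct) (simp_all add: dih_word_append dih_word_relator)

definition dih_of :: "nat \<Rightarrow> nat list set \<Rightarrow> nat \<Rightarrow> dih" where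
  "dih_of n X = dih_word n (rep X)"

lemma dih_of_cls: "w \<in> words n \<Longrightarrow> dih_of n (cls n w) = dih_word n w"
  unfolding dih_of_def using weq_rep_cls dih_word_weq by metis

lemma dih_of_mult:
  "X \<in> carrier (coxW n) \<Longrightarrow> Y \<in> carrier (coxW n) \<Longrightarrow>
   dih_of n (X \<otimes>\<^bsub>coxW n\<^esub> Y) = vmult (dih_of n X) (dih_of n Y)"
  by (auto simp: carrier_coxW mult_cls dih_of_cls dih_word_append)

lemma dih_of_one: "dih_of n \<one>\<^bsub>coxW n\<^esub> = vone"
  by (simp add: one_coxW dih_of_cls)

lemma dih_of_inv:
  assumes "X \<in> carrier (coxW n)"
  shows "dih_of n (inv\<^bsub>coxW n\<^esub> X) = (\<lambda>k. dih_inv (dih_of n X k))"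
proof -
  interpret group "coxW n" by (rule group_coxW)
  have "vmult (dih_of n X) (dih_of n (inv\<^bsub>coxW n\<^esub> X)) = vone"
    using assms by (simp flip: dih_of_mult add: dih_of_one)
  then show ?thesis
    by (auto simp: fun_eq_iff vmult_def intro: dih_inv_unique)
qed

section \<open>Normal forms and faithfulness of the embedding\<close>

definition block_word :: "nat \<Rightarrow> nat \<Rightarrow> dih \<Rightarrow> nat list" where
  "block_word n k x =
     (if snd x \<ge> 0 then concat (replicate (nat (snd x)) [n + k, k])
      else concat (replicate (nat (- snd x)) [k, n + k])) @ (if fst x then [k] else [])"

definition nf_word :: "nat \<Rightarrow> (nat \<Rightarrow> dih) \<Rightarrow> nat list" where
  "nf_word n h = concat (map (\<lambda>k. block_word n k (h k)) [1..<n+1])"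

lemma set_block_word: "set (block_word n k x) \<subseteq> {k, n + k}"
  by (auto simp: block_word_def)

lemma block_word_in_words: "k \<in> {1..n} \<Longrightarrow> block_word n k x \<in> words n"
  using set_block_word[of n k x] by (auto simp: words_def)

lemma nf_word_in_words: "nf_word n h \<in> words n"
  unfolding nf_word_def words_def by (auto dest!: subsetD[OF set_block_word])

lemma (in group) involution_mult_pow:
  assumes a: "a \<in> carrier G" and b: "b \<in> carrier G"
    and aa: "a \<otimes> a = \<one>" and bb: "b \<otimes> b = \<one>" and y: "y \<in> carrier G"
  shows "a \<otimes> ((b \<otimes> a) [^] (t::int) \<otimes> y) = (b \<otimes> a) [^] (- t) \<otimes> (a \<otimes> y)"
    and "b \<otimes> ((b \<otimes> a) [^] t \<otimes> y) = (b \<otimes> a) [^] (1 - t) \<otimes> (a \<otimes> y)"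
proof -
  have inv_a: "inv a = a" and inv_b: "inv b = b"
    using a b aa bb by (simp_all add: inv_equality)
  have cancel: "a \<otimes> (a \<otimes> z) = z" if "z \<in> carrier G" for z
    using a that by (simp add: aa flip: m_assoc)
  then have "(\<lambda>x. a \<otimes> x \<otimes> a) \<in> hom G G"
    using a by (intro homI) (auto simp: m_assoc)
  moreover have "a \<otimes> (b \<otimes> a) \<otimes> a = inv (b \<otimes> a)"
    using a b aa by (simp add: inv_mult_group inv_a inv_b m_assoc)
  ultimately have "a \<otimes> (b \<otimes> a) [^] t \<otimes> a = (b \<otimes> a) [^] (- t)"
    using a b hom_int_pow[of "\<lambda>x. a \<otimes> x \<otimes> a" G G "b \<otimes> a" t]
    by (simp add: group_axioms int_pow_inv int_pow_neg m_assoc cancel)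
  then have conj: "a \<otimes> (b \<otimes> a) [^] t = (b \<otimes> a) [^] (- t) \<otimes> a"
    using a b by (metis aa int_pow_closed m_assoc m_closed r_one)
  then show "a \<otimes> ((b \<otimes> a) [^] t \<otimes> y) = (b \<otimes> a) [^] (- t) \<otimes> (a \<otimes> y)"
    using a b y by (simp flip: m_assoc)
  have "b \<otimes> (b \<otimes> a) [^] t = (b \<otimes> a) \<otimes> (a \<otimes> (b \<otimes> a) [^] t)"
    using a b by (simp add: m_assoc cancel)
  also have "\<dots> = (b \<otimes> a) [^] (1 - t) \<otimes> a"
    using a b int_pow_mult[of "b \<otimes> a" 1 "- t"] by (simp add: conj m_assoc)
  finally show "b \<otimes> ((b \<otimes> a) [^] t \<otimes> y) = (b \<otimes> a) [^] (1 - t) \<otimes> (a \<otimes> y)"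
    using a b y by (simp flip: m_assoc)
qed

lemma cls_block_word:
  assumes k: "k \<in> {1..n}"
  shows "cls n (block_word n k x) =
    (cls n [n + k] \<otimes>\<^bsub>coxW n\<^esub> cls n [k]) [^]\<^bsub>coxW n\<^esub> snd x
      \<otimes>\<^bsub>coxW n\<^esub> (if fst x then cls n [k] else \<one>\<^bsub>coxW n\<^esub>)"
proof -
  interpret group "coxW n" by (rule group_coxW)
  define a b where "a = cls n [k]" and "b = cls n [n + k]"
  have k2: "k \<in> {1..2*n}" "n + k \<in> {1..2*n}"
    using k by auto
  then have ab: "a \<in> carrier (coxW n)" "b \<in> carrier (coxW n)"
    "a \<otimes>\<^bsub>coxW n\<^esub> a = \<one>\<^bsub>coxW n\<^esub>" "b \<otimes>\<^bsub>coxW n\<^esub> b = \<one>\<^bsub>coxW n\<^esub>"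
    by (simp_all add: a_def b_def cls_in_carrier cls_singleton_square)
  have pos: "cls n (concat (replicate m [n + k, k])) = (b \<otimes>\<^bsub>coxW n\<^esub> a) [^]\<^bsub>coxW n\<^esub> m" for m
    using k2 by (simp add: cls_replicate a_def b_def mult_cls)
  have neg: "cls n (concat (replicate m [k, n + k])) = (b \<otimes>\<^bsub>coxW n\<^esub> a) [^]\<^bsub>coxW n\<^esub> (- int m)" for m
  proof -
    have "inv\<^bsub>coxW n\<^esub> a = a" "inv\<^bsub>coxW n\<^esub> b = b"
      using ab by (simp_all add: inv_equality)
    moreover have "cls n [k, n + k] = a \<otimes>\<^bsub>coxW n\<^esub> b"
      using k2 by (simp add: a_def b_def mult_cls)
    ultimately have "cls n [k, n + k] = inv\<^bsub>coxW n\<^esub> (b \<otimes>\<^bsub>coxW n\<^esub> a)"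
      using ab by (simp add: inv_mult_group)
    then show ?thesis
      using k2 ab by (simp add: cls_replicate nat_pow_inv int_pow_neg_int)
  qed
  have "cls n (if snd x \<ge> 0 then concat (replicate (nat (snd x)) [n + k, k])
                else concat (replicate (nat (- snd x)) [k, n + k]))
        = (b \<otimes>\<^bsub>coxW n\<^esub> a) [^]\<^bsub>coxW n\<^esub> snd x"
    by (simp add: pos neg flip: int_pow_int)
  then show ?thesis
    using k2 block_word_in_words[OF k]
    by (auto simp: block_word_def mult_cls[symmetric] a_def b_def one_coxW)
qed

lemma cls_Cons_block_word:
  assumes k: "k \<in> {1..n}" and s: "s \<in> {k, n + k}"
  shows "cls n (s # block_word n k x) = cls n (block_word n k (dih_mult (gen_dih n s) x))"
proof -
  interpret group "coxW n" by (rule group_coxW)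
  obtain e t where x: "x = (e, t)"
    by (cases x)
  define a b where "a = cls n [k]" and "b = cls n [n + k]"
  have k2: "k \<in> {1..2*n}" "n + k \<in> {1..2*n}"
    using k by auto
  then have ab: "a \<in> carrier (coxW n)" "b \<in> carrier (coxW n)"
    "a \<otimes>\<^bsub>coxW n\<^esub> a = \<one>\<^bsub>coxW n\<^esub>" "b \<otimes>\<^bsub>coxW n\<^esub> b = \<one>\<^bsub>coxW n\<^esub>"
    by (simp_all add: a_def b_def cls_in_carrier cls_singleton_square)
  have "s \<in> {1..2*n}"
    using s k2 by auto
  then have "cls n (s # block_word n k x) = cls n [s] \<otimes>\<^bsub>coxW n\<^esub> cls n (block_word n k x)"
    by (simp add: mult_cls block_word_in_words[OF k])
  with s k show ?thesis
    using involution_mult_pow[OF ab] involution_mult_pow[OF ab one_closed] ab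
    by (cases e) (auto simp: x gen_dih_def cls_block_word m_assoc simp flip: a_def b_def)
qed

lemma cls_Cons_commute:
  assumes "s \<in> {1..2*n}" and "\<forall>y\<in>set w. y \<in> {1..2*n} \<and> coord n y \<noteq> coord n s"
  shows "cls n (s # w) = cls n (w @ [s])"
  using assms(2)
proof (induction w)
  case (Cons y w)
  interpret group "coxW n" by (rule group_coxW)
  have y: "y \<in> {1..2*n}" "coord n y \<noteq> coord n s" and w: "w \<in> words n"
    using Cons.prems by (auto simp: words_def)
  have "cls n (s # y # w) = cls n [s] \<otimes>\<^bsub>coxW n\<^esub> cls n [y] \<otimes>\<^bsub>coxW n\<^esub> cls n w"
    using assms y w by (simp add: mult_cls)
  also have "\<dots> = cls n [y] \<otimes>\<^bsub>coxW n\<^esub> cls n (s # w)"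
    using cls_singleton_commute[OF assms(1) y(1)] y assms w
    by (simp add: m_assoc mult_cls cls_in_carrier)
  also have "\<dots> = cls n (y # w @ [s])"
    using Cons assms y w by (simp add: mult_cls)
  finally show ?case
    by simp
qed simp

lemma nf_word_split:
  assumes "j \<in> {1..n}"
  shows "nf_word n h = concat (map (\<lambda>k. block_word n k (h k)) [1..<j]) @ block_word n j (h j)
           @ concat (map (\<lambda>k. block_word n k (h k)) [Suc j..<n+1])"
proof -
  have "[1..<n+1] = [1..<j] @ [j..<n+1]"
    using assms upt_add_eq_append[of 1 j "n + 1 - j"] by auto
  also have "[j..<n+1] = j # [Suc j..<n+1]"
    using assms by (simp add: upt_conv_Cons)
  finally show ?thesis
    by (simp only: nf_word_def map_append list.map concat_append concat.simps append_assoc)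
qed

lemma cls_Cons_nf_word:
  assumes s: "s \<in> {1..2*n}"
  shows "cls n (s # nf_word n h) = cls n (nf_word n (vmult (gen_vec n s) h))"
proof -
  define j where "j = coord n s"
  have j: "j \<in> {1..n}" and sj: "s \<in> {j, n + j}"
    using s coord_range[OF s] by (auto simp: j_def coord_def)
  define A B where "A = concat (map (\<lambda>k. block_word n k (h k)) [1..<j])"
    and "B = concat (map (\<lambda>k. block_word n k (h k)) [Suc j..<n+1])"
  have nf: "nf_word n (h(j := y)) = A @ block_word n j y @ B" for y
  proof -
    have "concat (map (\<lambda>k. block_word n k ((h(j := y)) k)) [1..<j]) = A"
      "concat (map (\<lambda>k. block_word n k ((h(j := y)) k)) [Suc j..<n+1]) = B"
      unfolding A_def B_def by (auto intro!: arg_cong[where f = concat])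
    then show ?thesis
      by (simp only: nf_word_split[OF j] fun_upd_same)
  qed
  have AB: "A \<in> words n" "B \<in> words n"
    unfolding A_def B_def words_def using j by (auto dest!: subsetD[OF set_block_word])
  have A_commute: "\<forall>y\<in>set A. y \<in> {1..2*n} \<and> coord n y \<noteq> coord n s"
    unfolding A_def j_def[symmetric] using j
    by (auto dest!: subsetD[OF set_block_word] simp: coord_def)
  have "cls n (s # nf_word n h) = cls n (s # A) \<otimes>\<^bsub>coxW n\<^esub> cls n (block_word n j (h j) @ B)"
    using s AB block_word_in_words[OF j] nf[of "h j"] by (simp add: mult_cls)
  also have "\<dots> = cls n A \<otimes>\<^bsub>coxW n\<^esub> cls n (s # block_word n j (h j)) \<otimes>\<^bsub>coxW n\<^esub> cls n B"
    using s AB block_word_in_words[OF j] by (simp add: cls_Cons_commute[OF s A_commute] mult_cls)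
  also have "\<dots> = cls n (nf_word n (h(j := dih_mult (gen_dih n s) (h j))))"
    using AB block_word_in_words[OF j] by (simp add: cls_Cons_block_word[OF j sj] nf mult_cls)
  finally show ?thesis
    by (simp add: j_def vmult_gen_vec)
qed

lemma cls_nf_word: "w \<in> words n \<Longrightarrow> cls n w = cls n (nf_word n (dih_word n w))"
proof (induction w)
  case Nil
  have "nf_word n vone = []"
    by (simp add: nf_word_def block_word_def)
  then show ?case
    by simp
next
  case (Cons s w)
  then have s: "s \<in> {1..2*n}" and w: "w \<in> words n"
    by auto
  have "cls n (s # w) = cls n [s] \<otimes>\<^bsub>coxW n\<^esub> cls n w"
    using s w by (simp add: mult_cls)
  also have "\<dots> = cls n (s # nf_word n (dih_word n w))"
    using Cons.IH[OF w] s by (simp add: mult_cls nf_word_in_words)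
  also have "\<dots> = cls n (nf_word n (dih_word n (s # w)))"
    using s by (simp only: cls_Cons_nf_word dih_word_Cons)
  finally show ?case .
qed

lemma coxW_eq_nf_word:
  assumes "X \<in> carrier (coxW n)"
  shows "X = cls n (nf_word n (dih_of n X))"
proof -
  obtain w where "w \<in> words n" "X = cls n w"
    using assms by (auto simp: carrier_coxW)
  then show ?thesis
    by (metis dih_of_cls cls_nf_word)
qed

lemma coxW_eqI:
  "X \<in> carrier (coxW n) \<Longrightarrow> Y \<in> carrier (coxW n) \<Longrightarrow> dih_of n X = dih_of n Y \<Longrightarrow> X = Y"
  by (metis coxW_eq_nf_word)

definition supported :: "nat \<Rightarrow> (nat \<Rightarrow> dih) \<Rightarrow> bool" where
  "supported n h \<longleftrightarrow> (\<forall>k. k \<notin> {1..n} \<longrightarrow> h k = (False, 0))"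

lemma supported_dih_word: "w \<in> words n \<Longrightarrow> supported n (dih_word n w)"
  by (induction w) (auto simp: supported_def vmult_gen_vec coord_def)

lemma supported_dih_of: "X \<in> carrier (coxW n) \<Longrightarrow> supported n (dih_of n X)"
  by (auto simp: carrier_coxW dih_of_cls supported_dih_word)

lemma dih_word_block_word: "k \<in> {1..n} \<Longrightarrow> dih_word n (block_word n k x) = vone(k := x)"
proof -
  assume k: "k \<in> {1..n}"
  have "dih_word n (concat (replicate m [n + k, k])) = vone(k := (False, int m))"
    and "dih_word n (concat (replicate m [k, n + k])) = vone(k := (False, - int m))" for m
    using k by (induction m) (auto simp: vmult_gen_vec gen_dih_def coord_def fun_eq_iff)
  then show ?thesis
    using k by (cases x)
      (auto simp: block_word_def dih_word_append gen_vec_def gen_dih_def coord_def vmult_def fun_eq_iff)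
qed

lemma dih_word_nf_word: "supported n h \<Longrightarrow> dih_word n (nf_word n h) = h"
proof -
  have "distinct ks \<Longrightarrow> set ks \<subseteq> {1..n} \<Longrightarrow>
    dih_word n (concat (map (\<lambda>k. block_word n k (h k)) ks)) =
      (\<lambda>k. if k \<in> set ks then h k else (False, 0))"
    for ks
    by (induction ks) (auto simp: dih_word_append dih_word_block_word vmult_def fun_eq_iff)
  from this[of "[1..<n+1]"] show "supported n h \<Longrightarrow> ?thesis"
    by (auto simp: nf_word_def supported_def fun_eq_iff atLeastLessThanSuc_atLeastAtMost
        simp del: upt_Suc)
qed

lemma dih_of_nf_word: "supported n h \<Longrightarrow> dih_of n (cls n (nf_word n h)) = h"
  by (simp add: dih_of_cls nf_word_in_words dih_word_nf_word)

section \<open>The fundamental group as the kernel of \<lambda>\<close>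

lemma lam_word_Nil [simp]: "lam_word n c [] = (\<lambda>_. False)"
  by (simp add: lam_word_def)

lemma lam_word_Cons [simp]: "lam_word n c (s # w) = (\<lambda>k. lam n c s k \<noteq> lam_word n c w k)"
  by (simp add: lam_word_def)

lemma lam_word_append: "lam_word n c (u @ v) = (\<lambda>k. lam_word n c u k \<noteq> lam_word n c v k)"
  by (induction u) auto

lemma lam_word_relator: "r \<in> relators n \<Longrightarrow> lam_word n c r = (\<lambda>_. False)"
  by (auto simp: relators_def)

lemma lam_word_weq: "weq n u v \<Longrightarrow> lam_word n c u = lam_word n c v"
  by (induction rule: weq.induct) (simp_all add: lam_word_append lam_word_relator)

lemma lamhom_cls: "w \<in> words n \<Longrightarrow> lamhom n c (cls n w) = lam_word n c w"
  unfolding lamhom_def by (metis lam_word_weq weq_rep_cls)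

lemma cls_in_pi1_iff: "w \<in> words n \<Longrightarrow> cls n w \<in> pi1 n c \<longleftrightarrow> lam_word n c w = (\<lambda>_. False)"
  by (simp add: pi1_def kernel_def Z2n_def lamhom_cls cls_in_carrier)

lemma pi1_subset_carrier: "pi1 n c \<subseteq> carrier (coxW n)"
  by (simp add: pi1_def kernel_def)

lemma lam_word_letters:
  "distinct ks \<Longrightarrow> set ks \<subseteq> {1..n} \<Longrightarrow> lam_word n c ks = (\<lambda>k. k \<in> set ks)"
  by (induction ks) (auto simp: lam_def fun_eq_iff)

definition has_upper_entry :: "(nat \<Rightarrow> nat \<Rightarrow> bool) \<Rightarrow> nat \<Rightarrow> bool" where
  "has_upper_entry c k \<longleftrightarrow> (\<exists>j. 1 \<le> j \<and> j < k \<and> c j k)"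

lemma index_set_iff: "q \<in> index_set n c \<longleftrightarrow> (\<exists>k\<in>{1..n}. q = n + k \<and> has_upper_entry c k)"
proof
  assume "q \<in> index_set n c"
  then obtain p where "n + 1 \<le> p" "p < q" "q \<le> 2 * n" "c (p - n) (q - n)"
    by (auto simp: index_set_def)
  then show "\<exists>k\<in>{1..n}. q = n + k \<and> has_upper_entry c k"
    by (intro bexI[of _ "q - n"]) (auto simp: has_upper_entry_def intro!: exI[of _ "p - n"])
next
  assume "\<exists>k\<in>{1..n}. q = n + k \<and> has_upper_entry c k"
  then obtain k j where "k \<in> {1..n}" "q = n + k" "1 \<le> j" "j < k" "c j k"
    by (auto simp: has_upper_entry_def)
  then show "q \<in> index_set n c"
    unfolding index_set_def by (intro CollectI conjI exI[of _ "n + j"]) auto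
qed

lemma lam_word_no_upper_entry:
  assumes "w \<in> words n" and "\<not> has_upper_entry c k"
  shows "lam_word n c w k \<longleftrightarrow> fst (dih_word n w k)"
proof -
  have "lam n c s k \<longleftrightarrow> coord n s = k" if "s \<in> {1..2*n}" for s
    using that assms(2) by (auto simp: lam_def coord_def has_upper_entry_def)
  with assms(1) show ?thesis
    by (induction w) (auto simp: vmult_gen_vec)
qed

lemma pi1_no_upper_entry:
  assumes "X \<in> pi1 n c" and "\<not> has_upper_entry c k"
  shows "\<not> fst (dih_of n X k)"
proof -
  obtain w where w: "w \<in> words n" "X = cls n w"
    using assms(1) pi1_subset_carrier[of n c] by (auto simp: carrier_coxW)
  then have "\<not> lam_word n c w k"
    using assms(1) cls_in_pi1_iff by metis
  with w assms(2) show ?thesis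
    by (simp add: dih_of_cls lam_word_no_upper_entry)
qed

section \<open>The commutator subgroup lies in a lattice of translations\<close>

definition lattice_vec :: "nat \<Rightarrow> (nat \<Rightarrow> nat \<Rightarrow> bool) \<Rightarrow> (nat \<Rightarrow> dih) \<Rightarrow> bool" where
  "lattice_vec n c h \<longleftrightarrow> supported n h \<and>
     (\<forall>k. \<not> fst (h k) \<and> even (snd (h k)) \<and> (\<not> has_upper_entry c k \<longrightarrow> snd (h k) = 0))"

definition lattice_subgroup :: "nat \<Rightarrow> (nat \<Rightarrow> nat \<Rightarrow> bool) \<Rightarrow> nat list set set" where
  "lattice_subgroup n c = {X \<in> carrier (coxW n). lattice_vec n c (dih_of n X)}"

lemma subgroup_lattice_subgroup: "subgroup (lattice_subgroup n c) (coxW n)"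
proof -
  interpret group "coxW n" by (rule group_coxW)
  have "dih_mult x y = (False, snd x + snd y)" if "\<not> fst x" "\<not> fst y" for x y
    using that by (cases x; cases y) auto
  then show ?thesis
    by (intro subgroupI)
      (auto simp: lattice_subgroup_def lattice_vec_def supported_def dih_of_one dih_of_inv
        dih_of_mult dih_inv_def vmult_def)
qed

definition dih_commutator :: "dih \<Rightarrow> dih \<Rightarrow> dih" where
  "dih_commutator x y = dih_mult (dih_mult (dih_mult x y) (dih_inv x)) (dih_inv y)"

lemma dih_commutator_even_translation:
  "\<not> fst (dih_commutator x y)" "even (snd (dih_commutator x y))"
  by (cases x; cases y; auto simp: dih_commutator_def dih_inv_def)+

lemma dih_commutator_self: "dih_commutator x x = (False, 0)"
  by (cases x) (auto simp: dih_commutator_def dih_inv_def)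

lemma dih_commutator_one:
  "dih_commutator (False, 0) y = (False, 0)" "dih_commutator x (False, 0) = (False, 0)"
  by (cases x; cases y; auto simp: dih_commutator_def dih_inv_def)+

lemma dih_commutator_translations: "\<not> fst x \<Longrightarrow> \<not> fst y \<Longrightarrow> dih_commutator x y = (False, 0)"
  by (cases x; cases y) (auto simp: dih_commutator_def dih_inv_def)

lemma dih_of_commutator:
  assumes "X \<in> carrier (coxW n)" "Y \<in> carrier (coxW n)"
  shows "dih_of n (X \<otimes>\<^bsub>coxW n\<^esub> Y \<otimes>\<^bsub>coxW n\<^esub> inv\<^bsub>coxW n\<^esub> X \<otimes>\<^bsub>coxW n\<^esub> inv\<^bsub>coxW n\<^esub> Y)
     = (\<lambda>k. dih_commutator (dih_of n X k) (dih_of n Y k))"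
proof -
  interpret group "coxW n" by (rule group_coxW)
  show ?thesis
    using assms by (simp add: dih_of_mult dih_of_inv vmult_def dih_commutator_def)
qed

lemma commutator_in_lattice_subgroup:
  assumes "X \<in> pi1 n c" "Y \<in> pi1 n c"
  shows "X \<otimes>\<^bsub>coxW n\<^esub> Y \<otimes>\<^bsub>coxW n\<^esub> inv\<^bsub>coxW n\<^esub> X \<otimes>\<^bsub>coxW n\<^esub> inv\<^bsub>coxW n\<^esub> Y
    \<in> lattice_subgroup n c"
proof -
  interpret group "coxW n" by (rule group_coxW)
  have XY: "X \<in> carrier (coxW n)" "Y \<in> carrier (coxW n)"
    using assms pi1_subset_carrier by blast+
  then have "supported n (dih_of n X)" "supported n (dih_of n Y)"
    by (simp_all add: supported_dih_of)
  then show ?thesis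
    using XY pi1_no_upper_entry[OF assms(1)] pi1_no_upper_entry[OF assms(2)]
    by (auto simp: lattice_subgroup_def lattice_vec_def supported_def dih_of_commutator
        dih_commutator_even_translation dih_commutator_translations)
qed

lemma derived_subset_lattice_subgroup: "derived (coxW n) (pi1 n c) \<subseteq> lattice_subgroup n c"
proof -
  interpret group "coxW n" by (rule group_coxW)
  show ?thesis
    unfolding derived_def
    by (rule generate_subgroup_incl[OF _ subgroup_lattice_subgroup])
      (auto intro: commutator_in_lattice_subgroup)
qed

section \<open>The squares of the \<alpha>_q are commutators\<close>

definition alpha_vec :: "nat \<Rightarrow> (nat \<Rightarrow> nat \<Rightarrow> bool) \<Rightarrow> nat \<Rightarrow> nat \<Rightarrow> dih" where
  "alpha_vec n c i = (\<lambda>k. if k = i then (False, 1)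
                         else if i < k \<and> k \<le> n \<and> c i k then (True, 0) else (False, 0))"

lemma alpha_eq_cls: "alpha n c (n + i) = cls n ((n + i) # i # filter (c i) [i + 1..<n + 1])"
  by (simp add: alpha_def)

lemma alpha_word_in_words: "i \<in> {1..n} \<Longrightarrow> (n + i) # i # filter (c i) [i + 1..<n + 1] \<in> words n"
  by (auto simp: words_def)

lemma alpha_in_carrier: "i \<in> {1..n} \<Longrightarrow> alpha n c (n + i) \<in> carrier (coxW n)"
  unfolding alpha_eq_cls by (intro cls_in_carrier alpha_word_in_words)

lemma alpha_in_pi1:
  assumes i: "i \<in> {1..n}"
  shows "alpha n c (n + i) \<in> pi1 n c"
proof -
  have "lam_word n c (filter (c i) [i + 1..<n + 1]) = (\<lambda>k. i < k \<and> k \<le> n \<and> c i k)"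
    using i by (subst lam_word_letters) (auto simp del: upt_Suc)
  then have "lam_word n c ((n + i) # i # filter (c i) [i + 1..<n + 1]) = (\<lambda>_. False)"
    using i by (auto simp: lam_def fun_eq_iff)
  then show ?thesis
    unfolding alpha_eq_cls cls_in_pi1_iff[OF alpha_word_in_words[OF i]] .
qed

lemma dih_word_letters:
  "distinct ks \<Longrightarrow> set ks \<subseteq> {1..n} \<Longrightarrow>
   dih_word n ks = (\<lambda>k. if k \<in> set ks then (True, 0) else (False, 0))"
  by (induction ks) (auto simp: vmult_gen_vec gen_dih_def coord_def fun_eq_iff)

lemma dih_of_alpha:
  assumes i: "i \<in> {1..n}"
  shows "dih_of n (alpha n c (n + i)) = alpha_vec n c i"
proof -
  have "dih_word n (filter (c i) [i + 1..<n + 1]) =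
    (\<lambda>k. if i < k \<and> k \<le> n \<and> c i k then (True, 0) else (False, 0))"
    using i by (subst dih_word_letters) (auto simp del: upt_Suc)
  then have "dih_word n ((n + i) # i # filter (c i) [i + 1..<n + 1]) = alpha_vec n c i"
    using i by (auto simp: vmult_gen_vec gen_dih_def coord_def alpha_vec_def fun_eq_iff)
  then show ?thesis
    unfolding alpha_eq_cls dih_of_cls[OF alpha_word_in_words[OF i]] .
qed

lemma dih_of_alpha_square:
  "i \<in> {1..n} \<Longrightarrow>
   dih_of n (alpha n c (n + i) \<otimes>\<^bsub>coxW n\<^esub> alpha n c (n + i)) = vone(i := (False, 2))"
  by (simp add: alpha_in_carrier dih_of_mult dih_of_alpha)
    (auto simp: vmult_def alpha_vec_def fun_eq_iff)

lemma dih_of_alpha_commutator: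
  assumes "1 \<le> i" "i < j" "j \<le> n" "c i j"
  shows "dih_of n (alpha n c (n + j) \<otimes>\<^bsub>coxW n\<^esub> alpha n c (n + i) \<otimes>\<^bsub>coxW n\<^esub>
      inv\<^bsub>coxW n\<^esub> alpha n c (n + j) \<otimes>\<^bsub>coxW n\<^esub> inv\<^bsub>coxW n\<^esub> alpha n c (n + i))
    = vone(j := (False, 2))"
proof -
  have reflection_or_one: "alpha_vec n c l k \<in> {(True, 0), (False, 0)}" if "k \<noteq> l" for k l
    using that by (simp add: alpha_vec_def)
  have "dih_commutator (alpha_vec n c j k) (alpha_vec n c i k) = (vone(j := (False, 2))) k" for k
  proof -
    consider "k = j" | "k = i" | "k \<noteq> i" "k \<noteq> j"
      by blast
    then show ?thesis
    proof cases
      case 3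
      then show ?thesis
        using reflection_or_one[OF 3(1)] reflection_or_one[OF 3(2)]
        by (auto simp: dih_commutator_self dih_commutator_one)
    qed (use assms in \<open>auto simp: alpha_vec_def dih_commutator_def dih_inv_def\<close>)
  qed
  then show ?thesis
    using assms by (simp add: alpha_in_carrier dih_of_commutator dih_of_alpha fun_eq_iff)
qed

lemma alpha_square_in_derived:
  assumes "q \<in> index_set n c"
  shows "alpha n c q \<otimes>\<^bsub>coxW n\<^esub> alpha n c q \<in> derived (coxW n) (pi1 n c)"
proof -
  interpret group "coxW n" by (rule group_coxW)
  obtain i j where ij: "1 \<le> i" "i < j" "j \<le> n" "c i j" and q: "q = n + j"
    using assms unfolding index_set_iff has_upper_entry_def by auto
  then have i: "i \<in> {1..n}" and j: "j \<in> {1..n}"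
    by auto
  have "alpha n c q \<otimes>\<^bsub>coxW n\<^esub> alpha n c q =
     alpha n c (n + j) \<otimes>\<^bsub>coxW n\<^esub> alpha n c (n + i) \<otimes>\<^bsub>coxW n\<^esub>
      inv\<^bsub>coxW n\<^esub> alpha n c (n + j) \<otimes>\<^bsub>coxW n\<^esub> inv\<^bsub>coxW n\<^esub> alpha n c (n + i)"
    unfolding q using alpha_in_carrier[OF i] alpha_in_carrier[OF j]
    by (intro coxW_eqI[where n = n])
      (simp_all add: dih_of_alpha_square[OF j] dih_of_alpha_commutator[of i j n c, OF ij])
  also have "\<dots> \<in> derived (coxW n) (pi1 n c)"
    unfolding derived_def using alpha_in_pi1[OF i] alpha_in_pi1[OF j]
    by (intro generate.incl) blast
  finally show ?thesis .
qed

section \<open>The isomorphism with the free abelian group\<close>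

definition alpha_sq_vec :: "nat \<Rightarrow> (nat \<Rightarrow>\<^sub>0 int) \<Rightarrow> nat \<Rightarrow> dih" where
  "alpha_sq_vec n f =
     (\<lambda>k. if k \<in> {1..n} then (False, 2 * Poly_Mapping.lookup f (n + k)) else (False, 0))"

definition alpha_sq_hom :: "nat \<Rightarrow> (nat \<Rightarrow>\<^sub>0 int) \<Rightarrow> nat list set" where
  "alpha_sq_hom n f = cls n (nf_word n (alpha_sq_vec n f))"

lemma alpha_sq_hom_in_carrier: "alpha_sq_hom n f \<in> carrier (coxW n)"
  by (simp add: alpha_sq_hom_def cls_in_carrier nf_word_in_words)

lemma dih_of_alpha_sq_hom: "dih_of n (alpha_sq_hom n f) = alpha_sq_vec n f"
  by (simp add: alpha_sq_hom_def dih_of_nf_word supported_def alpha_sq_vec_def)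

lemma alpha_sq_hom_eqI:
  "X \<in> carrier (coxW n) \<Longrightarrow> dih_of n X = alpha_sq_vec n f \<Longrightarrow> alpha_sq_hom n f = X"
  by (metis coxW_eqI alpha_sq_hom_in_carrier dih_of_alpha_sq_hom)

lemma alpha_sq_hom_frag_of:
  assumes "q \<in> index_set n c"
  shows "alpha_sq_hom n (frag_of q) = alpha n c q \<otimes>\<^bsub>coxW n\<^esub> alpha n c q"
proof -
  interpret group "coxW n" by (rule group_coxW)
  obtain i where i: "i \<in> {1..n}" and q: "q = n + i"
    using assms unfolding index_set_iff by blast
  show ?thesis
    unfolding q using i alpha_in_carrier[OF i]
    by (intro alpha_sq_hom_eqI) (auto simp: dih_of_alpha_square[OF i] alpha_sq_vec_def fun_eq_iff)
qed

lemma alpha_sq_hom_add: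
  "alpha_sq_hom n (f + g) = alpha_sq_hom n f \<otimes>\<^bsub>coxW n\<^esub> alpha_sq_hom n g"
proof -
  interpret group "coxW n" by (rule group_coxW)
  show ?thesis
    by (intro alpha_sq_hom_eqI)
      (auto simp: alpha_sq_hom_in_carrier dih_of_mult dih_of_alpha_sq_hom alpha_sq_vec_def vmult_def
        lookup_add fun_eq_iff)
qed

lemma alpha_sq_hom_diff:
  "alpha_sq_hom n (f - g) = alpha_sq_hom n f \<otimes>\<^bsub>coxW n\<^esub> inv\<^bsub>coxW n\<^esub> alpha_sq_hom n g"
proof -
  interpret group "coxW n" by (rule group_coxW)
  show ?thesis
    by (intro alpha_sq_hom_eqI)
      (auto simp: alpha_sq_hom_in_carrier dih_of_mult dih_of_inv dih_of_alpha_sq_hom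
        alpha_sq_vec_def vmult_def dih_inv_def lookup_minus fun_eq_iff)
qed

lemma subgroup_derived_pi1: "subgroup (derived (coxW n) (pi1 n c)) (coxW n)"
  by (rule group.derived_is_subgroup[OF group_coxW pi1_subset_carrier])

lemma alpha_sq_hom_in_derived:
  "Poly_Mapping.keys f \<subseteq> index_set n c \<Longrightarrow> alpha_sq_hom n f \<in> derived (coxW n) (pi1 n c)"
proof (induction f rule: frag_induction)
  case zero
  have "alpha_sq_hom n 0 = \<one>\<^bsub>coxW n\<^esub>"
    by (intro alpha_sq_hom_eqI) (auto simp: dih_of_cls alpha_sq_vec_def one_coxW cls_in_carrier)
  then show ?case
    by (simp add: subgroup.one_closed[OF subgroup_derived_pi1])
next
  case (one q)
  then show ?case
    by (simp add: alpha_sq_hom_frag_of alpha_square_in_derived)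
next
  case (diff f g)
  then show ?case
    by (simp add: alpha_sq_hom_diff subgroup.m_closed[OF subgroup_derived_pi1]
        subgroup.m_inv_closed[OF subgroup_derived_pi1])
qed

lemma inj_on_alpha_sq_hom: "inj_on (alpha_sq_hom n) (carrier (free_Abelian_group (index_set n c)))"
proof (rule inj_onI)
  fix f g
  assume f: "f \<in> carrier (free_Abelian_group (index_set n c))"
    and g: "g \<in> carrier (free_Abelian_group (index_set n c))"
    and eq: "alpha_sq_hom n f = alpha_sq_hom n g"
  have "alpha_sq_vec n f = alpha_sq_vec n g"
    using arg_cong[OF eq, of "dih_of n"] by (simp add: dih_of_alpha_sq_hom)
  then have "Poly_Mapping.lookup f (n + k) = Poly_Mapping.lookup g (n + k)" if "k \<in> {1..n}" for k
    using that by (auto simp: alpha_sq_vec_def fun_eq_iff dest: spec[of _ k])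
  moreover have "Poly_Mapping.lookup f q = 0" "Poly_Mapping.lookup g q = 0"
    if "q \<notin> index_set n c" for q
    using f g that by (auto simp: in_keys_iff)
  ultimately show "f = g"
    by (metis index_set_iff poly_mapping_eqI)
qed

lemma derived_subset_alpha_sq_hom_image:
  assumes Y: "Y \<in> derived (coxW n) (pi1 n c)"
  shows "Y \<in> alpha_sq_hom n ` carrier (free_Abelian_group (index_set n c))"
proof -
  define h where "h = dih_of n Y"
  have Y_carrier: "Y \<in> carrier (coxW n)" and lattice: "lattice_vec n c h"
    using derived_subset_lattice_subgroup Y by (auto simp: lattice_subgroup_def h_def)
  define g where "g = (\<lambda>q. if q \<in> index_set n c then snd (h (q - n)) div 2 else 0)"
  have "finite (index_set n c)"
    by (rule finite_subset[of _ "{..2*n}"]) (auto simp: index_set_def)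
  then have "finite {q. g q \<noteq> 0}"
    by (rule finite_subset[rotated]) (auto simp: g_def)
  then have lookup_f: "Poly_Mapping.lookup (Abs_poly_mapping g) = g"
    by simp
  have "alpha_sq_vec n (Abs_poly_mapping g) = h"
  proof
    fix k
    have "\<not> fst (h k)" "even (snd (h k))" "\<not> has_upper_entry c k \<Longrightarrow> snd (h k) = 0"
      "k \<notin> {1..n} \<Longrightarrow> h k = (False, 0)"
      using lattice by (auto simp: lattice_vec_def supported_def)
    then show "alpha_sq_vec n (Abs_poly_mapping g) k = h k"
      using index_set_iff[of "n + k" n c] unfolding alpha_sq_vec_def lookup_f
      by (cases "h k") (auto simp: g_def)
  qed
  then have "alpha_sq_hom n (Abs_poly_mapping g) = Y"
    using Y_carrier by (intro alpha_sq_hom_eqI) (simp_all add: h_def)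
  moreover have "Abs_poly_mapping g \<in> carrier (free_Abelian_group (index_set n c))"
  proof (simp, rule subsetI)
    fix q
    assume "q \<in> Poly_Mapping.keys (Abs_poly_mapping g)"
    then have "g q \<noteq> 0"
      by (simp add: in_keys_iff lookup_f)
    then show "q \<in> index_set n c"
      by (simp add: g_def split: if_splits)
  qed
  ultimately show ?thesis
    by blast
qed

lemma alpha_sq_hom_iso:
  "alpha_sq_hom n \<in> iso (free_Abelian_group (index_set n c))
     (subgroup_generated (coxW n) (derived (coxW n) (pi1 n c)))"
proof -
  have image:
    "alpha_sq_hom n ` carrier (free_Abelian_group (index_set n c)) = derived (coxW n) (pi1 n c)"
    using alpha_sq_hom_in_derived derived_subset_alpha_sq_hom_image by auto
  have "alpha_sq_hom n \<in> hom (free_Abelian_group (index_set n c)) (coxW n)"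
    by (intro homI) (simp_all add: alpha_sq_hom_in_carrier alpha_sq_hom_add)
  then have "alpha_sq_hom n \<in> hom (free_Abelian_group (index_set n c))
      (subgroup_generated (coxW n) (derived (coxW n) (pi1 n c)))"
    using image by (simp add: hom_into_subgroup_eq subgroup_derived_pi1 group_coxW)
  then show ?thesis
    using image inj_on_alpha_sq_hom
    by (simp add: iso_def bij_betw_def
        subgroup.carrier_subgroup_generated_subgroup[OF subgroup_derived_pi1])
qed

theorem corollary2p8:
  fixes n :: nat and c :: "nat \<Rightarrow> nat \<Rightarrow> bool"
  assumes "n \<ge> 1" and "bott_matrix n c"
  shows "\<exists>\<phi>. \<phi> \<in> iso (free_Abelian_group (index_set n c))
               (subgroup_generated (coxW n) (derived (coxW n) (pi1 n c)))
           \<and> (\<forall>q\<in>index_set n c.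
                \<phi> (frag_of q) = alpha n c q \<otimes>\<^bsub>coxW n\<^esub> alpha n c q)"
  using alpha_sq_hom_iso alpha_sq_hom_frag_of by blast

end
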